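(* Let $A=\sum_{k=1}^n A_k\,dx^k$ be a smooth $r\times r$ complex-matrix-valued $1$-form on $\mathbb{R}^n$ (i.e. a connection $d+A$ on the trivial rank $r$ complex bundle on $\mathbb{R}^n$). Then there exists a smooth function $g$ on $\mathbb{R}^n$ with values in invertible $(2n+2)r\times(2n+2)r$ complex matrices such that $A_{ij}=[dg\,g^{-1}]_{ij}$ for all $1\le i,j\le r$, i.e. $A$ is the upper-left $r\times r$ block of $dg\,g^{-1}$. *)

theory Defs
  imports "HOL-Analysis.Analysis" "Jordan_Normal_Form.Matrix"
begin

fun Ck :: "nat \<Rightarrow> ('a::real_normed_vector \<Rightarrow> 'b::real_normed_vector) \<Rightarrow> bool" where
  "Ck 0 f = continuous_on UNIV f"
| "Ck (Suc k) f = ((\<forall>x. f differentiable (at x)) \<and>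
      (\<forall>v. Ck k (\<lambda>x. frechet_derivative f (at x) v)))"

definition smooth_fun :: "('a::real_normed_vector \<Rightarrow> 'b::real_normed_vector) \<Rightarrow> bool" where
  "smooth_fun f \<longleftrightarrow> (\<forall>k. Ck k f)"

definition smooth_mat_fun :: "nat \<Rightarrow> ('a::real_normed_vector \<Rightarrow> complex mat) \<Rightarrow> bool" where
  "smooth_mat_fun N g \<longleftrightarrow> (\<forall>x. g x \<in> carrier_mat N N) \<and>
     (\<forall>i<N. \<forall>j<N. smooth_fun (\<lambda>x. g x $$ (i,j)))"

definition partial_mat :: "'n::finite \<Rightarrow> (real^'n \<Rightarrow> complex mat) \<Rightarrow> real^'n \<Rightarrow> complex mat" where
  "partial_mat k g x = Matrix.mat (dim_row (g x)) (dim_col (g x))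
     (\<lambda>(i,j). frechet_derivative (\<lambda>y. g y $$ (i,j)) (at x) (axis k 1))"

definition mat_inv :: "complex mat \<Rightarrow> complex mat" where
  "mat_inv M = (THE B. inverts_mat M B \<and> inverts_mat B M)"

end

theory Submission
  imports Defs
begin

text \<open>
  Split the matrices into \<open>r \<times> r\<close> blocks indexed by \<open>0, \<dots>, n\<close> and put
  \<open>B(x) = \<Sum>\<^sub>k x\<^sub>k E\<^sub>0\<^sub>k\<close> and \<open>C(x) = - \<Sum>\<^sub>k A\<^sub>k(x) E\<^sub>k\<^sub>0\<close>.
  Both square to zero, so \<open>g = (1 + C)(1 + B)\<close> is invertible with inverse \<open>(1 - B)(1 - C)\<close>.
  The top block row of \<open>g\<close> is that of \<open>1 + B\<close>, so the top block row of \<open>\<partial>\<^sub>k g\<close> is the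
  unit block \<open>E\<^sub>0\<^sub>k\<close>. Hence the top block row of \<open>\<partial>\<^sub>k g \<cdot> g\<^sup>-\<^sup>1\<close> is block row \<open>k\<close> of
  \<open>(1 - B)(1 - C)\<close>, whose leading block is \<open>- C\<^sub>k\<^sub>0 = A\<^sub>k\<close>.
\<close>

section \<open>Closure properties of smooth functions\<close>

lemma frechet_derivative_worksI:
  "f differentiable (at x) \<Longrightarrow> (f has_derivative frechet_derivative f (at x)) (at x)"
  by (simp add: frechet_derivative_works)

lemma Ck_Suc_imp_Ck: "Ck (Suc k) f \<Longrightarrow> Ck k f"
proof (induction k arbitrary: f)
  case 0
  then show ?case
    by (auto intro!: differentiable_imp_continuous_on differentiable_at_imp_differentiable_on)
next
  case (Suc k)
  then show ?case by (metis Ck.simps(2))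
qed

lemma Ck_const: "Ck k (\<lambda>x. c)"
  by (induction k arbitrary: c) auto

lemma Ck_add: "Ck k f \<Longrightarrow> Ck k g \<Longrightarrow> Ck k (\<lambda>x. f x + g x)"
proof (induction k arbitrary: f g)
  case 0
  then show ?case by (auto intro!: continuous_on_add)
next
  case (Suc k)
  have "frechet_derivative (\<lambda>x. f x + g x) (at x) v =
      frechet_derivative f (at x) v + frechet_derivative g (at x) v" for x v
  proof -
    have "((\<lambda>x. f x + g x) has_derivative
        (\<lambda>v. frechet_derivative f (at x) v + frechet_derivative g (at x) v)) (at x)"
      using Suc.prems by (auto intro!: has_derivative_add frechet_derivative_worksI)
    from frechet_derivative_at[OF this, symmetric] show ?thesis
      by (rule fun_cong)
  qed
  then show ?case using Suc by auto
qed

lemma Ck_mult: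
  fixes f g :: "'a::real_normed_vector \<Rightarrow> 'b::real_normed_algebra"
  shows "Ck k f \<Longrightarrow> Ck k g \<Longrightarrow> Ck k (\<lambda>x. f x * g x)"
proof (induction k arbitrary: f g)
  case 0
  then show ?case by (auto intro!: continuous_on_mult)
next
  case (Suc k)
  have product_rule: "(\<lambda>x. frechet_derivative (\<lambda>x. f x * g x) (at x) v) =
      (\<lambda>x. f x * frechet_derivative g (at x) v + frechet_derivative f (at x) v * g x)" for v
  proof
    fix x
    have "((\<lambda>x. f x * g x) has_derivative
        (\<lambda>v. f x * frechet_derivative g (at x) v + frechet_derivative f (at x) v * g x)) (at x)"
      using Suc.prems by (auto intro!: has_derivative_mult frechet_derivative_worksI)
    from frechet_derivative_at[OF this, symmetric]
    show "frechet_derivative (\<lambda>x. f x * g x) (at x) v =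
        f x * frechet_derivative g (at x) v + frechet_derivative f (at x) v * g x"
      by (rule fun_cong)
  qed
  have "Ck k f" "Ck k g"
    using Suc.prems Ck_Suc_imp_Ck by blast+
  then show ?case
    using Suc by (auto simp: product_rule intro!: Ck_add)
qed

lemma Ck_bounded_linear:
  assumes "bounded_linear f"
  shows "Ck k f"
proof (cases k)
  case 0
  then show ?thesis using assms by (simp add: linear_continuous_on)
next
  case (Suc m)
  have "frechet_derivative f (at x) = f" for x
    using frechet_derivative_at[OF bounded_linear_imp_has_derivative[OF assms]] by metis
  then show ?thesis
    using Suc bounded_linear_imp_differentiable[OF assms] by (simp add: Ck_const)
qed

lemma smooth_fun_const: "smooth_fun (\<lambda>x. c)"
  by (simp add: smooth_fun_def Ck_const)

lemma smooth_fun_add: "smooth_fun f \<Longrightarrow> smooth_fun g \<Longrightarrow> smooth_fun (\<lambda>x. f x + g x)"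
  by (simp add: smooth_fun_def Ck_add)

lemma smooth_fun_mult:
  fixes f g :: "'a::real_normed_vector \<Rightarrow> 'b::real_normed_algebra"
  shows "smooth_fun f \<Longrightarrow> smooth_fun g \<Longrightarrow> smooth_fun (\<lambda>x. f x * g x)"
  by (simp add: smooth_fun_def Ck_mult)

lemma smooth_fun_uminus:
  fixes f :: "'a::real_normed_vector \<Rightarrow> 'b::real_normed_algebra_1"
  assumes "smooth_fun f"
  shows "smooth_fun (\<lambda>x. - f x)"
  using smooth_fun_mult[OF smooth_fun_const[of "-1"] assms] by simp

lemma smooth_fun_bounded_linear: "bounded_linear f \<Longrightarrow> smooth_fun f"
  by (simp add: smooth_fun_def Ck_bounded_linear)

lemma smooth_fun_sum:
  "finite S \<Longrightarrow> (\<And>i. i \<in> S \<Longrightarrow> smooth_fun (f i)) \<Longrightarrow> smooth_fun (\<lambda>x. \<Sum>i\<in>S. f i x)"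
  by (induction S rule: finite_induct) (auto intro!: smooth_fun_add smooth_fun_const)

lemma smooth_mat_fun_one: "smooth_mat_fun N (\<lambda>x. 1\<^sub>m N)"
  by (simp add: smooth_mat_fun_def smooth_fun_const)

lemma smooth_mat_fun_add:
  assumes F: "smooth_mat_fun N F" and G: "smooth_mat_fun N G"
  shows "smooth_mat_fun N (\<lambda>x. F x + G x)"
proof -
  have "(F x + G x) $$ (i,j) = F x $$ (i,j) + G x $$ (i,j)" if "i < N" "j < N" for x i j
  proof -
    have "F x \<in> carrier_mat N N" "G x \<in> carrier_mat N N"
      using F G by (auto simp: smooth_mat_fun_def)
    then show ?thesis using that by simp
  qed
  then show ?thesis
    using F G by (auto simp: smooth_mat_fun_def intro!: smooth_fun_add)
qed

lemma smooth_mat_fun_mult: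
  assumes F: "smooth_mat_fun N F" and G: "smooth_mat_fun N G"
  shows "smooth_mat_fun N (\<lambda>x. F x * G x)"
proof -
  have "(F x * G x) $$ (i,j) = (\<Sum>m\<in>{0..<N}. F x $$ (i,m) * G x $$ (m,j))"
    if "i < N" "j < N" for x i j
  proof -
    have "F x \<in> carrier_mat N N" "G x \<in> carrier_mat N N"
      using F G by (auto simp: smooth_mat_fun_def)
    then show ?thesis using that by (simp add: scalar_prod_def)
  qed
  then show ?thesis
    using F G by (auto simp: smooth_mat_fun_def intro!: mult_carrier_mat smooth_fun_sum smooth_fun_mult)
qed

section \<open>Unipotent block matrices\<close>

lemma square_zero_mat_inverse:
  fixes X :: "'a::ring_1 mat"
  assumes X: "X \<in> carrier_mat N N" and XX: "X * X = 0\<^sub>m N N"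
  shows "(1\<^sub>m N + X) * (1\<^sub>m N - X) = 1\<^sub>m N" and "(1\<^sub>m N - X) * (1\<^sub>m N + X) = 1\<^sub>m N"
proof -
  have I: "1\<^sub>m N \<in> carrier_mat N N" by simp
  have P: "1\<^sub>m N + X \<in> carrier_mat N N" and M: "1\<^sub>m N - X \<in> carrier_mat N N"
    using X by auto
  have "(1\<^sub>m N + X) * (1\<^sub>m N - X) = (1\<^sub>m N - X) + (X - X * X)"
    using X by (simp add: add_mult_distrib_mat[OF I X M] mult_minus_distrib_mat[OF X I X])
  also have "\<dots> = 1\<^sub>m N" using X XX by (intro eq_matI) auto
  finally show "(1\<^sub>m N + X) * (1\<^sub>m N - X) = 1\<^sub>m N" .
  have "(1\<^sub>m N - X) * (1\<^sub>m N + X) = (1\<^sub>m N + X) - (X + X * X)"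
    using X by (simp add: minus_mult_distrib_mat[OF I X P] mult_add_distrib_mat[OF X I X])
  also have "\<dots> = 1\<^sub>m N" using X XX by (intro eq_matI) auto
  finally show "(1\<^sub>m N - X) * (1\<^sub>m N + X) = 1\<^sub>m N" .
qed

lemma mat_inv_eqI:
  assumes M: "M \<in> carrier_mat N N" and B: "B \<in> carrier_mat N N"
    and MB: "M * B = 1\<^sub>m N" and BM: "B * M = 1\<^sub>m N"
  shows "mat_inv M = B" and "invertible_mat M"
proof -
  have inverts: "inverts_mat M B \<and> inverts_mat B M"
    using M B MB BM by (auto simp: inverts_mat_def)
  then show "invertible_mat M"
    using M by (auto simp: invertible_mat_def square_mat.simps)
  show "mat_inv M = B"
    unfolding mat_inv_def
  proof (rule the_equality)
    show "inverts_mat M B \<and> inverts_mat B M" by (rule inverts)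
  next
    fix B' assume "inverts_mat M B' \<and> inverts_mat B' M"
    then have MB': "M * B' = 1\<^sub>m N" and B'M: "B' * M = 1\<^sub>m (dim_row B')"
      using M by (auto simp: inverts_mat_def)
    have B': "B' \<in> carrier_mat N N"
      using MB' B'M M by (metis carrier_matD carrier_matI index_mult_mat(2,3) index_one_mat(2,3))
    have "B' = B' * (M * B)" using MB B' by simp
    also have "\<dots> = (B' * M) * B" using B' M B by simp
    also have "\<dots> = B" using B'M B' B by simp
    finally show "B' = B" .
  qed
qed

definition top_right_block :: "nat \<Rightarrow> 'a::zero mat \<Rightarrow> bool" where
  "top_right_block r M \<longleftrightarrow>
     (\<forall>i<dim_row M. \<forall>j<dim_col M. M $$ (i,j) \<noteq> 0 \<longrightarrow> i < r \<and> r \<le> j)"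

definition bottom_left_block :: "nat \<Rightarrow> 'a::zero mat \<Rightarrow> bool" where
  "bottom_left_block r M \<longleftrightarrow>
     (\<forall>i<dim_row M. \<forall>j<dim_col M. M $$ (i,j) \<noteq> 0 \<longrightarrow> r \<le> i \<and> j < r)"

lemma top_right_block_square_zero:
  fixes M :: "'a::semiring_0 mat"
  assumes "M \<in> carrier_mat N N" and "top_right_block r M"
  shows "M * M = 0\<^sub>m N N"
  using assms
  by (intro eq_matI) (auto simp: top_right_block_def scalar_prod_def intro!: sum.neutral,
      metis mult_zero_left mult_zero_right not_less)

lemma bottom_left_block_square_zero:
  fixes M :: "'a::semiring_0 mat"
  assumes "M \<in> carrier_mat N N" and "bottom_left_block r M"
  shows "M * M = 0\<^sub>m N N"
  using assms
  by (intro eq_matI) (auto simp: bottom_left_block_def scalar_prod_def intro!: sum.neutral,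
      metis mult_zero_left mult_zero_right not_less)

lemma mult_mat_index_unit_row:
  fixes M P :: "'a::semiring_1 mat"
  assumes "M \<in> carrier_mat R N" "P \<in> carrier_mat N K" "i < R" "p < N" "l < K"
    and "\<And>m. m < N \<Longrightarrow> M $$ (i,m) = (if m = p then 1 else 0)"
  shows "(M * P) $$ (i,l) = P $$ (p,l)"
proof -
  have "(M * P) $$ (i,l) = (\<Sum>m\<in>{0..<N}. M $$ (i,m) * P $$ (m,l))"
    using assms by (simp add: scalar_prod_def)
  also have "\<dots> = (\<Sum>m\<in>{0..<N}. if m = p then P $$ (m,l) else 0)"
    using assms by (intro sum.cong) auto
  also have "\<dots> = P $$ (p,l)"
    using assms(4) by (simp add: sum.delta)
  finally show ?thesis .
qed

lemma unipotent_block_top_rows: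
  fixes B C :: "'a::semiring_1 mat"
  assumes "B \<in> carrier_mat N N" "C \<in> carrier_mat N N" "bottom_left_block r C"
    and "i < r" "i < N" "l < N"
  shows "((1\<^sub>m N + C) * (1\<^sub>m N + B)) $$ (i,l) = (1\<^sub>m N + B) $$ (i,l)"
  using assms by (intro mult_mat_index_unit_row[of _ N N]) (auto simp: bottom_left_block_def)

lemma unipotent_block_inverse_left_columns:
  fixes B C :: "'a::ring_1 mat"
  assumes "B \<in> carrier_mat N N" "C \<in> carrier_mat N N" "top_right_block r B"
    and "r \<le> p" "p < N" "j < N"
  shows "((1\<^sub>m N - B) * (1\<^sub>m N - C)) $$ (p,j) = (1\<^sub>m N - C) $$ (p,j)"
  using assms by (intro mult_mat_index_unit_row[of _ N N]) (auto simp: top_right_block_def)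

lemma unipotent_block_inverse:
  fixes B C :: "complex mat"
  assumes B: "B \<in> carrier_mat N N" "top_right_block r B"
    and C: "C \<in> carrier_mat N N" "bottom_left_block r C"
  shows "invertible_mat ((1\<^sub>m N + C) * (1\<^sub>m N + B))"
    and "mat_inv ((1\<^sub>m N + C) * (1\<^sub>m N + B)) = (1\<^sub>m N - B) * (1\<^sub>m N - C)"
proof -
  note B_inv = square_zero_mat_inverse[OF B(1) top_right_block_square_zero[OF B]]
  note C_inv = square_zero_mat_inverse[OF C(1) bottom_left_block_square_zero[OF C]]
  have c: "1\<^sub>m N + C \<in> carrier_mat N N" "1\<^sub>m N - C \<in> carrier_mat N N"
    "1\<^sub>m N + B \<in> carrier_mat N N" "1\<^sub>m N - B \<in> carrier_mat N N"
    using B C by auto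
  have "(1\<^sub>m N + C) * (1\<^sub>m N + B) * ((1\<^sub>m N - B) * (1\<^sub>m N - C))
      = (1\<^sub>m N + C) * (((1\<^sub>m N + B) * (1\<^sub>m N - B)) * (1\<^sub>m N - C))"
    using c by (simp add: assoc_mult_mat[of _ N N _ N _ N])
  also have "\<dots> = 1\<^sub>m N"
    using c by (simp add: B_inv C_inv left_mult_one_mat[OF c(2)])
  finally have right: "(1\<^sub>m N + C) * (1\<^sub>m N + B) * ((1\<^sub>m N - B) * (1\<^sub>m N - C)) = 1\<^sub>m N" .
  have "(1\<^sub>m N - B) * (1\<^sub>m N - C) * ((1\<^sub>m N + C) * (1\<^sub>m N + B))
      = (1\<^sub>m N - B) * (((1\<^sub>m N - C) * (1\<^sub>m N + C)) * (1\<^sub>m N + B))"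
    using c by (simp add: assoc_mult_mat[of _ N N _ N _ N])
  also have "\<dots> = 1\<^sub>m N"
    using c by (simp add: B_inv C_inv left_mult_one_mat[OF c(3)])
  finally have left: "(1\<^sub>m N - B) * (1\<^sub>m N - C) * ((1\<^sub>m N + C) * (1\<^sub>m N + B)) = 1\<^sub>m N" .
  show "invertible_mat ((1\<^sub>m N + C) * (1\<^sub>m N + B))"
    and "mat_inv ((1\<^sub>m N + C) * (1\<^sub>m N + B)) = (1\<^sub>m N - B) * (1\<^sub>m N - C)"
    using mat_inv_eqI[OF _ _ right left] c by auto
qed

section \<open>The gauge\<close>

text \<open>Coordinate \<open>k\<close> is attached to block \<open>f k + 1\<close>, for an injection \<open>f\<close> of the coordinates
  into block indices.\<close>

definition coordinate_row_mat :: "('n::finite \<Rightarrow> nat) \<Rightarrow> nat \<Rightarrow> nat \<Rightarrow> real^'n \<Rightarrow> complex mat" where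
  "coordinate_row_mat f r N x = Matrix.mat N N (\<lambda>(i,j).
     \<Sum>k\<in>{k. i < r \<and> j = Suc (f k) * r + i}. complex_of_real (x $ k))"

definition connection_column_mat ::
    "('n::finite \<Rightarrow> nat) \<Rightarrow> nat \<Rightarrow> nat \<Rightarrow> ('n \<Rightarrow> real^'n \<Rightarrow> complex mat) \<Rightarrow> real^'n \<Rightarrow> complex mat" where
  "connection_column_mat f r N A x = Matrix.mat N N (\<lambda>(p,j).
     \<Sum>k\<in>{k. j < r \<and> p div r = Suc (f k)}. - A k x $$ (p mod r, j))"

definition gauge_mat ::
    "('n::finite \<Rightarrow> nat) \<Rightarrow> nat \<Rightarrow> nat \<Rightarrow> ('n \<Rightarrow> real^'n \<Rightarrow> complex mat) \<Rightarrow> real^'n \<Rightarrow> complex mat" where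
  "gauge_mat f r N A x =
     (1\<^sub>m N + connection_column_mat f r N A x) * (1\<^sub>m N + coordinate_row_mat f r N x)"

lemma coordinate_row_mat_carrier: "coordinate_row_mat f r N x \<in> carrier_mat N N"
  by (simp add: coordinate_row_mat_def)

lemma connection_column_mat_carrier: "connection_column_mat f r N A x \<in> carrier_mat N N"
  by (simp add: connection_column_mat_def)

lemma top_right_block_coordinate_row_mat: "top_right_block r (coordinate_row_mat f r N x)"
  unfolding top_right_block_def
proof (intro allI impI)
  fix i j
  assume "i < dim_row (coordinate_row_mat f r N x)" "j < dim_col (coordinate_row_mat f r N x)"
    and "coordinate_row_mat f r N x $$ (i,j) \<noteq> 0"
  then have "(\<Sum>k\<in>{k. i < r \<and> j = Suc (f k) * r + i}. complex_of_real (x $ k)) \<noteq> 0"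
    by (simp add: coordinate_row_mat_def)
  then obtain k where "i < r \<and> j = Suc (f k) * r + i"
    by (auto elim: sum.not_neutral_contains_not_neutral)
  then show "i < r \<and> r \<le> j" by simp
qed

lemma bottom_left_block_connection_column_mat:
  "bottom_left_block r (connection_column_mat f r N A x)"
  unfolding bottom_left_block_def
proof (intro allI impI)
  fix p j
  assume "p < dim_row (connection_column_mat f r N A x)"
    "j < dim_col (connection_column_mat f r N A x)"
    and "connection_column_mat f r N A x $$ (p,j) \<noteq> 0"
  then have "(\<Sum>k\<in>{k. j < r \<and> p div r = Suc (f k)}. - A k x $$ (p mod r, j)) \<noteq> 0"
    by (simp add: connection_column_mat_def)
  then obtain k where "j < r \<and> p div r = Suc (f k)"
    by (auto elim: sum.not_neutral_contains_not_neutral)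
  then show "r \<le> p \<and> j < r"
    by (metis div_less not_le nat.distinct(1))
qed

lemma connection_column_mat_index:
  assumes "inj f" "i < r" "j < r" "Suc (f k) * r + i < N"
  shows "connection_column_mat f r N A x $$ (Suc (f k) * r + i, j) = - A k x $$ (i, j)"
proof -
  have "(Suc (f k) * r + i) div r = Suc (f k)" "(Suc (f k) * r + i) mod r = i"
    using assms(2) by (simp_all del: mult_Suc)
  then show ?thesis
    using assms by (simp add: connection_column_mat_def inj_eq sum.delta)
qed

lemma gauge_mat_carrier: "gauge_mat f r N A x \<in> carrier_mat N N"
  unfolding gauge_mat_def
  by (intro mult_carrier_mat[of _ N N _ N] add_carrier_mat one_carrier_mat
      coordinate_row_mat_carrier connection_column_mat_carrier)

lemma partial_mat_carrier:
  assumes "\<And>x. g x \<in> carrier_mat N N"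
  shows "partial_mat k g x \<in> carrier_mat N N"
  using assms[of x] by (auto simp: partial_mat_def)

lemma frechet_derivative_affine:
  assumes "bounded_linear L"
  shows "frechet_derivative (\<lambda>y. c + L y) (at x) = L"
proof -
  have "((\<lambda>y. c + L y) has_derivative L) (at x)"
    using has_derivative_add[OF has_derivative_const bounded_linear_imp_has_derivative[OF assms]]
    by simp
  from frechet_derivative_at[OF this] show ?thesis by (rule sym)
qed

lemma bounded_linear_coordinate_row_mat_index:
  assumes "i < N" "j < N"
  shows "bounded_linear (\<lambda>x. coordinate_row_mat f r N x $$ (i,j))"
  using assms by (auto simp: coordinate_row_mat_def intro!: bounded_linear_sum
      bounded_linear_compose[OF bounded_linear_of_real bounded_linear_vec_nth])

lemma coordinate_row_mat_axis:
  assumes "i < r" "i < N" "l < N"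
  shows "coordinate_row_mat f r N (axis k 1) $$ (i,l) = (if l = Suc (f k) * r + i then 1 else 0)"
proof -
  have "complex_of_real (axis k 1 $ k') = (if k' = k then 1 else 0)" for k'
    by (simp add: axis_def)
  then have "coordinate_row_mat f r N (axis k 1) $$ (i,l) =
      (\<Sum>k'\<in>{k'. i < r \<and> l = Suc (f k') * r + i}. if k' = k then 1 else 0)"
    using assms by (simp add: coordinate_row_mat_def)
  then show ?thesis
    using assms by (simp add: sum.delta)
qed

lemma smooth_mat_fun_coordinate_row_mat: "smooth_mat_fun N (coordinate_row_mat f r N)"
  by (simp add: smooth_mat_fun_def coordinate_row_mat_carrier smooth_fun_bounded_linear
      bounded_linear_coordinate_row_mat_index)

lemma smooth_mat_fun_connection_column_mat:
  assumes "\<And>k. smooth_mat_fun r (A k)"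
  shows "smooth_mat_fun N (connection_column_mat f r N A)"
proof -
  have "r \<noteq> 0" if "p div r = Suc m" for p m
    using that by (metis div_by_0 nat.distinct(1))
  then show ?thesis
    using assms
    by (auto simp: smooth_mat_fun_def connection_column_mat_def
        intro!: smooth_fun_sum smooth_fun_uminus)
qed

lemma smooth_mat_fun_gauge_mat:
  assumes "\<And>k. smooth_mat_fun r (A k)"
  shows "smooth_mat_fun N (gauge_mat f r N A)"
  unfolding gauge_mat_def
  by (intro smooth_mat_fun_mult smooth_mat_fun_add smooth_mat_fun_one
      smooth_mat_fun_coordinate_row_mat smooth_mat_fun_connection_column_mat assms)

lemma partial_gauge_mat_top_row:
  assumes "i < r" "i < N" "l < N"
  shows "partial_mat k (gauge_mat f r N A) x $$ (i,l) = (if l = Suc (f k) * r + i then 1 else 0)"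
proof -
  have "gauge_mat f r N A y $$ (i,l) = (1\<^sub>m N + coordinate_row_mat f r N y) $$ (i,l)" for y
    unfolding gauge_mat_def
    by (rule unipotent_block_top_rows) (use assms in \<open>simp_all add: coordinate_row_mat_carrier
        connection_column_mat_carrier bottom_left_block_connection_column_mat\<close>)
  then have "(\<lambda>y. gauge_mat f r N A y $$ (i,l)) =
      (\<lambda>y. 1\<^sub>m N $$ (i,l) + coordinate_row_mat f r N y $$ (i,l))"
    using assms by (simp add: coordinate_row_mat_def)
  then have "partial_mat k (gauge_mat f r N A) x $$ (i,l) = coordinate_row_mat f r N (axis k 1) $$ (i,l)"
    using assms gauge_mat_carrier[of f r N A x]
    by (simp add: partial_mat_def frechet_derivative_affine bounded_linear_coordinate_row_mat_index)
  then show ?thesis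
    using assms by (simp add: coordinate_row_mat_axis)
qed

lemma gauge_mat_invertible: "invertible_mat (gauge_mat f r N A x)"
  unfolding gauge_mat_def
  by (intro unipotent_block_inverse(1)[where r = r] coordinate_row_mat_carrier connection_column_mat_carrier
      top_right_block_coordinate_row_mat bottom_left_block_connection_column_mat)

lemma gauge_mat_connection:
  assumes f: "inj f" "Suc (Suc (f k)) * r \<le> N" and ij: "i < r" "j < r"
  shows "(partial_mat k (gauge_mat f r N A) x * mat_inv (gauge_mat f r N A x)) $$ (i,j) = A k x $$ (i,j)"
proof -
  define p where "p = Suc (f k) * r + i"
  have p: "r \<le> p" "p < N"
  proof -
    show "r \<le> p" by (simp add: p_def)
    have "p < Suc (Suc (f k)) * r" using ij(1) by (simp add: p_def)
    then show "p < N" using f(2) by linarith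
  qed
  have ijN: "i < N" "j < N"
    using ij p by linarith+
  define B where "B = coordinate_row_mat f r N x"
  define C where "C = connection_column_mat f r N A x"
  have BC: "B \<in> carrier_mat N N" "top_right_block r B" "C \<in> carrier_mat N N" "bottom_left_block r C"
    by (simp_all add: B_def C_def coordinate_row_mat_carrier connection_column_mat_carrier
        top_right_block_coordinate_row_mat bottom_left_block_connection_column_mat)
  have inv: "mat_inv (gauge_mat f r N A x) = (1\<^sub>m N - B) * (1\<^sub>m N - C)"
    unfolding gauge_mat_def B_def[symmetric] C_def[symmetric] by (rule unipotent_block_inverse(2)[OF BC])
  have "(1\<^sub>m N - B) * (1\<^sub>m N - C) \<in> carrier_mat N N"
    using BC by (metis minus_carrier_mat one_carrier_mat mult_carrier_mat)
  moreover have "partial_mat k (gauge_mat f r N A) x \<in> carrier_mat N N"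
    using gauge_mat_carrier by (rule partial_mat_carrier)
  moreover have "partial_mat k (gauge_mat f r N A) x $$ (i,m) = (if m = p then 1 else 0)" if "m < N" for m
    using ij ijN that by (simp add: partial_gauge_mat_top_row p_def)
  ultimately have "(partial_mat k (gauge_mat f r N A) x * ((1\<^sub>m N - B) * (1\<^sub>m N - C))) $$ (i,j)
      = ((1\<^sub>m N - B) * (1\<^sub>m N - C)) $$ (p,j)"
    using ijN p by (intro mult_mat_index_unit_row[of _ N N _ N]) auto
  also have "\<dots> = (1\<^sub>m N - C) $$ (p,j)"
    by (rule unipotent_block_inverse_left_columns[OF BC(1,3,2) p ijN(2)])
  also have "\<dots> = - C $$ (p,j)"
    using carrier_matD[OF BC(3)] p ij ijN by simp
  also have "\<dots> = A k x $$ (i,j)"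
    using connection_column_mat_index[OF f(1) ij p(2)[unfolded p_def]] by (simp add: C_def p_def)
  finally show ?thesis
    by (simp add: inv)
qed

theorem mainTheorem5:
  fixes A :: "'n::finite \<Rightarrow> real^'n \<Rightarrow> complex mat" and r :: nat
  assumes "\<And>k. smooth_mat_fun r (A k)"
  shows "\<exists>g :: real^'n \<Rightarrow> complex mat.
           smooth_mat_fun ((2 * CARD('n) + 2) * r) g \<and>
           (\<forall>x. invertible_mat (g x)) \<and>
           (\<forall>k x. \<forall>i<r. \<forall>j<r.
              A k x $$ (i,j) = (partial_mat k g x * mat_inv (g x)) $$ (i,j))"
proof -
  \<comment> \<open>Only the first \<open>(CARD('n) + 1) * r\<close> rows are used; on the rest \<open>g\<close> is the identity.\<close>
  define N where "N = (2 * CARD('n) + 2) * r"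
  obtain f :: "'n \<Rightarrow> nat" where f: "bij_betw f UNIV {0..<CARD('n)}"
    using ex_bij_betw_finite_nat[of "UNIV :: 'n set"] by auto
  have "Suc (Suc (f k)) * r \<le> N" for k
  proof -
    have "f k < CARD('n)" using f by (auto simp: bij_betw_def)
    then show ?thesis unfolding N_def by (intro mult_right_mono) auto
  qed
  moreover have "inj f" using f by (simp add: bij_betw_def)
  ultimately show ?thesis
    unfolding N_def[symmetric]
    by (intro exI[of _ "gauge_mat f r N A"] conjI allI impI smooth_mat_fun_gauge_mat assms
        gauge_mat_invertible gauge_mat_connection[symmetric])
qed

end
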